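(* Let $\mathcal P_{XY}$ be any distribution on $\mathbb R^p\times\mathbb R$ and let $Z_i=(X_i,Y_i)$, $i=1,\dots,n+1$, be i.i.d. from $\mathcal P_{XY}$. Let $\mathcal Z,\mathcal X$ be the unordered sets $\{Z_1,\dots,Z_{n+1}\}$, $\{X_1,\dots,X_{n+1}\}$; let $V(z)=V(z;\mathcal Z)$ be a real-valued score function depending on the data only through $\mathcal Z$, with $V_i=V(Z_i;\mathcal Z)$; let $H:\mathbb R^p\times\mathbb R^p\to[0,1]$ be a localizer depending on the data only through $\mathcal X$, with $H(x,x)=1$. Put $H_{ij}=H(X_i,X_j)$, $p^H_{ij}=H_{ij}/\sum_{k=1}^{n+1}H_{ik}$, $\hat{\mathcal F}_i=\sum_{j=1}^{n+1}p^H_{ij}\delta_{V_j}$, $\hat{\mathcal F}=\sum_{j=1}^{n}p^H_{n+1,j}\delta_{V_j}+p^H_{n+1,n+1}\delta_{+\infty}$ and $\Gamma=\{\sum_{k\in I}p^H_{ik}: i\in\{1,\dots,n+1\},\ I\subseteq\{1,\dots,n+1\}\}$. Fix $\alpha\in(0,1)$. Let $\tilde\alpha_1$ be the smallest value and $\tilde\alpha_2$ the largest value in $\Gamma\cup\{0\}$ such that, respectively, $$\alpha_1:=\frac{1}{n+1}\sum_{i=1}^{n+1}\mathbb 1\{V_i\le Q(\tilde\alpha_1;\hat{\mathcal F}_i)\}\ge\alpha,\qquad \alpha_2:=\frac{1}{n+1}\sum_{i=1}^{n+1}\mathbb 1\{V_i\le Q(\tilde\alpha_2;\hat{\mathcal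 F}_i)\}<\alpha.$$ Let $\tilde\alpha=\tilde\alpha_1$ with probability $\frac{\alpha-\alpha_2}{\alpha_1-\alpha_2}$ and $\tilde\alpha=\tilde\alpha_2$ with probability $\frac{\alpha_1-\alpha}{\alpha_1-\alpha_2}$, using randomization independent of everything else. Then $\mathbb P\{V_{n+1}\le Q(\tilde\alpha;\hat{\mathcal F})\}=\alpha$.
   Context: For a distribution $\mathcal F$ on $\mathbb R\cup\{\pm\infty\}$, $Q(\alpha;\mathcal F)=\inf\{t:\mathbb P_{T\sim\mathcal F}(T\le t)\ge\alpha\}$ (so $Q(0;\mathcal F)=-\infty$). $\delta_v$ is the point mass at $v$. *)

theory Defs
  imports "HOL-Probability.Probability"
begin

text \<open>Finite discrete distributions on the extended reals, given by weights w j and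
  atoms v j over a finite index set I (i.e. sum over j in I of w j times a point mass at v j).\<close>

definition disc_cdf :: "(nat \<Rightarrow> real) \<Rightarrow> (nat \<Rightarrow> ereal) \<Rightarrow> nat set \<Rightarrow> ereal \<Rightarrow> real" where
  "disc_cdf w v I t = (\<Sum>j\<in>I. if v j \<le> t then w j else 0)"

definition quant :: "real \<Rightarrow> (nat \<Rightarrow> real) \<Rightarrow> (nat \<Rightarrow> ereal) \<Rightarrow> nat set \<Rightarrow> ereal" where
  "quant a w v I = Inf {t. disc_cdf w v I t \<ge> a}"

text \<open>Data z 0, ..., z n (the paper's Z_1..Z_(n+1); index n is the test point).\<close>

definition Zset :: "nat \<Rightarrow> (nat \<Rightarrow> 'x \<times> real) \<Rightarrow> ('x \<times> real) multiset" where
  "Zset n z = mset (map z [0..<Suc n])"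

definition Xset :: "nat \<Rightarrow> (nat \<Rightarrow> 'x \<times> real) \<Rightarrow> 'x multiset" where
  "Xset n z = image_mset fst (Zset n z)"

definition Vsc :: "(('x \<times> real) multiset \<Rightarrow> 'x \<times> real \<Rightarrow> real) \<Rightarrow> nat \<Rightarrow> (nat \<Rightarrow> 'x \<times> real) \<Rightarrow> nat \<Rightarrow> real" where
  "Vsc V n z j = V (Zset n z) (z j)"

definition Hloc :: "('x multiset \<Rightarrow> 'x \<Rightarrow> 'x \<Rightarrow> real) \<Rightarrow> nat \<Rightarrow> (nat \<Rightarrow> 'x \<times> real) \<Rightarrow> nat \<Rightarrow> nat \<Rightarrow> real" where
  "Hloc H n z i j = H (Xset n z) (fst (z i)) (fst (z j))"

definition pH :: "('x multiset \<Rightarrow> 'x \<Rightarrow> 'x \<Rightarrow> real) \<Rightarrow> nat \<Rightarrow> (nat \<Rightarrow> 'x \<times> real) \<Rightarrow> nat \<Rightarrow> nat \<Rightarrow> real" where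
  "pH H n z i j = Hloc H n z i j / (\<Sum>k\<le>n. Hloc H n z i k)"

definition QFi :: "(('x \<times> real) multiset \<Rightarrow> 'x \<times> real \<Rightarrow> real) \<Rightarrow> ('x multiset \<Rightarrow> 'x \<Rightarrow> 'x \<Rightarrow> real)
   \<Rightarrow> nat \<Rightarrow> (nat \<Rightarrow> 'x \<times> real) \<Rightarrow> nat \<Rightarrow> real \<Rightarrow> ereal" where
  "QFi V H n z i a = quant a (pH H n z i) (\<lambda>j. ereal (Vsc V n z j)) {..n}"

definition QF :: "(('x \<times> real) multiset \<Rightarrow> 'x \<times> real \<Rightarrow> real) \<Rightarrow> ('x multiset \<Rightarrow> 'x \<Rightarrow> 'x \<Rightarrow> real)
   \<Rightarrow> nat \<Rightarrow> (nat \<Rightarrow> 'x \<times> real) \<Rightarrow> real \<Rightarrow> ereal" where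
  "QF V H n z a = quant a (pH H n z n) (\<lambda>j. if j = n then \<infinity> else ereal (Vsc V n z j)) {..n}"

definition Gam :: "('x multiset \<Rightarrow> 'x \<Rightarrow> 'x \<Rightarrow> real) \<Rightarrow> nat \<Rightarrow> (nat \<Rightarrow> 'x \<times> real) \<Rightarrow> real set" where
  "Gam H n z = {(\<Sum>k\<in>I. pH H n z i k) | i I. i \<le> n \<and> I \<subseteq> {..n}}"

definition acov :: "(('x \<times> real) multiset \<Rightarrow> 'x \<times> real \<Rightarrow> real) \<Rightarrow> ('x multiset \<Rightarrow> 'x \<Rightarrow> 'x \<Rightarrow> real)
   \<Rightarrow> nat \<Rightarrow> (nat \<Rightarrow> 'x \<times> real) \<Rightarrow> real \<Rightarrow> real" where
  "acov V H n z a = (\<Sum>i\<le>n. if ereal (Vsc V n z i) \<le> QFi V H n z i a then 1 else 0) / real (Suc n)"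

definition atil1 where
  "atil1 V H n z al = Min {g \<in> Gam H n z \<union> {0}. acov V H n z g \<ge> al}"

definition atil2 where
  "atil2 V H n z al = Max {g \<in> Gam H n z \<union> {0}. acov V H n z g < al}"

text \<open>Randomized choice: u is an independent Uniform[0,1] variable; atil1 is chosen iff
  u <= (al - alpha2)/(alpha1 - alpha2), which has exactly that probability.\<close>
definition atil where
  "atil V H n z u al =
     (let a1 = acov V H n z (atil1 V H n z al); a2 = acov V H n z (atil2 V H n z al) in
      if u \<le> (al - a2) / (a1 - a2) then atil1 V H n z al else atil2 V H n z al)"

end

theory Submission
  imports Defs
begin

(* Let s_i be the mass that the localized distribution F_i puts strictly below V_i. Then
   V_i <= Q(a; F_i) iff s_i < a, and V_{n+1} <= Q(a; F) iff s_{n+1} < a as well, since the atom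
   at +infinity never lies below V_{n+1}. Hence alpha_1 and alpha_2 are the fractions of indices i
   with s_i below the thresholds, and given the data the test point is covered with probability
   p [s_{n+1} < a_1] + (1 - p) [s_{n+1} < a_2]. The thresholds a_1, a_2 and p are symmetric
   functions of the sample, so by exchangeability of the i.i.d. sample this probability has the
   same expectation for every index in place of n+1. Averaging over the indices gives the
   expectation of p alpha_1 + (1 - p) alpha_2, which equals alpha by the choice of p. *)

type_synonym 'x score = "('x \<times> real) multiset \<Rightarrow> 'x \<times> real \<Rightarrow> real"
type_synonym 'x localizer_fn = "'x multiset \<Rightarrow> 'x \<Rightarrow> 'x \<Rightarrow> real"

lemma ereal_le_quant_iff:
  assumes fin: "finite I" and w: "\<And>j. j \<in> I \<Longrightarrow> 0 \<le> w j"
  shows "ereal x \<le> quant a w v I \<longleftrightarrow> (\<Sum>j\<in>I. if v j < ereal x then w j else 0) < a"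
proof
  assume le: "ereal x \<le> quant a w v I"
  define t where "t = Max (insert (-\<infinity>) {v j | j. j \<in> I \<and> v j < ereal x})"
  have fin_below: "finite {v j | j. j \<in> I \<and> v j < ereal x}" using fin by auto
  have t_less: "t < ereal x" unfolding t_def using fin_below by (subst Max_less_iff) auto
  have le_t_iff: "v j \<le> t \<longleftrightarrow> v j < ereal x" if "j \<in> I" for j
    using t_less that fin_below unfolding t_def by (auto intro: Max_ge le_less_trans)
  have "disc_cdf w v I t = (\<Sum>j\<in>I. if v j < ereal x then w j else 0)"
    unfolding disc_cdf_def using le_t_iff by (intro sum.cong) auto
  moreover have "\<not> a \<le> disc_cdf w v I t"
  proof
    assume "a \<le> disc_cdf w v I t"
    hence "quant a w v I \<le> t" unfolding quant_def by (intro Inf_lower) auto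
    thus False using le t_less by simp
  qed
  ultimately show "(\<Sum>j\<in>I. if v j < ereal x then w j else 0) < a" by simp
next
  assume less: "(\<Sum>j\<in>I. if v j < ereal x then w j else 0) < a"
  show "ereal x \<le> quant a w v I" unfolding quant_def
  proof (rule Inf_greatest, rule ccontr)
    fix t assume "t \<in> {t. a \<le> disc_cdf w v I t}" and "\<not> ereal x \<le> t"
    hence "a \<le> disc_cdf w v I t" "t < ereal x" by auto
    moreover have "disc_cdf w v I t \<le> (\<Sum>j\<in>I. if v j < ereal x then w j else 0)"
      unfolding disc_cdf_def using w \<open>t < ereal x\<close> by (intro sum_mono) auto
    ultimately show False using less by simp
  qed
qed

definition below_weight :: "'x score \<Rightarrow> 'x localizer_fn \<Rightarrow> nat \<Rightarrow> (nat \<Rightarrow> 'x \<times> real) \<Rightarrow> nat \<Rightarrow> real"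
  where "below_weight V H n z i = (\<Sum>j\<le>n. if Vsc V n z j < Vsc V n z i then pH H n z i j else 0)"

definition coverage :: "'x score \<Rightarrow> 'x localizer_fn \<Rightarrow> nat \<Rightarrow> (nat \<Rightarrow> 'x \<times> real) \<Rightarrow> real \<Rightarrow> real"
  where "coverage V H n z g = (\<Sum>i\<le>n. if below_weight V H n z i < g then 1 else 0) / real (Suc n)"

definition choice_prob :: "'x score \<Rightarrow> 'x localizer_fn \<Rightarrow> nat \<Rightarrow> (nat \<Rightarrow> 'x \<times> real) \<Rightarrow> real \<Rightarrow> real"
  where "choice_prob V H n z al =
    (al - coverage V H n z (atil2 V H n z al)) /
    (coverage V H n z (atil1 V H n z al) - coverage V H n z (atil2 V H n z al))"

text \<open>The probability over the independent randomization, with the data fixed, that the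
  \<open>i\<close>-th score lies below the quantile of its own localized distribution at level \<open>atil\<close>.\<close>
definition cover_prob :: "'x score \<Rightarrow> 'x localizer_fn \<Rightarrow> nat \<Rightarrow> (nat \<Rightarrow> 'x \<times> real) \<Rightarrow> real \<Rightarrow> nat \<Rightarrow> real"
  where "cover_prob V H n z al i =
    (if below_weight V H n z i < atil1 V H n z al then choice_prob V H n z al else 0) +
    (if below_weight V H n z i < atil2 V H n z al then 1 - choice_prob V H n z al else 0)"

lemma Gam_eq_image: "Gam H n z = (\<lambda>k. \<Sum>j\<in>snd k. pH H n z (fst k) j) ` ({..n} \<times> Pow {..n})"
  by (auto simp: Gam_def image_def Bex_def)

lemma finite_Gam: "finite (Gam H n z)"
  by (simp add: Gam_eq_image)

lemma zero_in_Gam: "0 \<in> Gam H n z"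
  by (auto simp: Gam_eq_image intro!: image_eqI[of _ _ "(0, {})"])

lemma Gam_Un_zero [simp]: "Gam H n z \<union> {0} = Gam H n z"
  using zero_in_Gam by blast

lemma finite_Gam_filter [simp]: "finite {g \<in> Gam H n z. P g}"
  by (rule finite_subset[OF _ finite_Gam]) auto

locale localizer =
  fixes H :: "'x localizer_fn"
  assumes H_nonneg: "\<And>M x y. 0 \<le> H M x y" and H_diag: "\<And>M x. H M x x = 1"
begin

lemma sum_Hloc_ge_1: "i \<le> n \<Longrightarrow> 1 \<le> (\<Sum>k\<le>n. Hloc H n z i k)"
  using member_le_sum[of i "{..n}" "Hloc H n z i"] by (simp add: Hloc_def H_nonneg H_diag)

lemma pH_nonneg: "i \<le> n \<Longrightarrow> 0 \<le> pH H n z i j"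
  using sum_Hloc_ge_1[of i n z] by (simp add: pH_def Hloc_def H_nonneg)

lemma sum_pH: "i \<le> n \<Longrightarrow> (\<Sum>k\<le>n. pH H n z i k) = 1"
  using sum_Hloc_ge_1[of i n z] by (simp add: pH_def flip: sum_divide_distrib)

lemma pH_diag_pos: "i \<le> n \<Longrightarrow> 0 < pH H n z i i"
  using sum_Hloc_ge_1[of i n z] by (simp add: pH_def Hloc_def H_diag)

lemma one_in_Gam: "1 \<in> Gam H n z"
  using sum_pH[of 0 n z] by (auto simp: Gam_eq_image intro!: image_eqI[of _ _ "(0, {..n})"])

lemma Vsc_le_QFi_iff: "i \<le> n \<Longrightarrow> ereal (Vsc V n z i) \<le> QFi V H n z i a \<longleftrightarrow> below_weight V H n z i < a"
  unfolding QFi_def below_weight_def by (subst ereal_le_quant_iff) (auto simp: pH_nonneg)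

lemma Vsc_le_QF_iff: "ereal (Vsc V n z n) \<le> QF V H n z a \<longleftrightarrow> below_weight V H n z n < a"
  unfolding QF_def below_weight_def
  by (subst ereal_le_quant_iff) (auto simp: pH_nonneg intro!: sum.cong arg_cong2[where f = "(<)"])

lemma acov_eq_coverage: "acov V H n z = coverage V H n z"
  by (auto simp: acov_def coverage_def Vsc_le_QFi_iff intro!: sum.cong)

lemma below_weight_nonneg: "i \<le> n \<Longrightarrow> 0 \<le> below_weight V H n z i"
  unfolding below_weight_def by (intro sum_nonneg) (auto simp: pH_nonneg)

lemma below_weight_less_1:
  assumes i: "i \<le> n"
  shows "below_weight V H n z i < 1"
proof -
  have "below_weight V H n z i = (\<Sum>j\<in>{..n} - {i}. if Vsc V n z j < Vsc V n z i then pH H n z i j else 0)"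
    unfolding below_weight_def using i by (subst sum.remove[of _ i]) auto
  also have "\<dots> \<le> (\<Sum>j\<in>{..n} - {i}. pH H n z i j)"
    by (intro sum_mono) (auto simp: pH_nonneg i)
  also have "\<dots> = 1 - pH H n z i i"
    using sum_pH[OF i, of z] i by (simp add: sum_diff1)
  finally show ?thesis using pH_diag_pos[OF i, of z] by simp
qed

lemma coverage_0 [simp]: "coverage V H n z 0 = 0"
  unfolding coverage_def by (auto intro!: sum.neutral simp: below_weight_nonneg not_less)

lemma coverage_1 [simp]: "coverage V H n z 1 = 1"
  by (simp add: coverage_def below_weight_less_1)

lemma atil_eq_if_choice_prob:
  "atil V H n z u al = (if u \<le> choice_prob V H n z al then atil1 V H n z al else atil2 V H n z al)"
  by (simp add: atil_def choice_prob_def acov_eq_coverage)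

context
  fixes al :: real
  assumes al: "0 < al" "al \<le> 1"
begin

lemma coverage_atil1_ge: "al \<le> coverage V H n z (atil1 V H n z al)"
proof -
  have "1 \<in> {g \<in> Gam H n z. al \<le> acov V H n z g}"
    using one_in_Gam al by (simp add: acov_eq_coverage)
  hence "atil1 V H n z al \<in> {g \<in> Gam H n z. al \<le> acov V H n z g}"
    unfolding atil1_def Gam_Un_zero by (intro Min_in) auto
  thus ?thesis by (simp add: acov_eq_coverage)
qed

lemma coverage_atil2_less: "coverage V H n z (atil2 V H n z al) < al"
proof -
  have "0 \<in> {g \<in> Gam H n z. acov V H n z g < al}"
    using zero_in_Gam al by (simp add: acov_eq_coverage)
  hence "atil2 V H n z al \<in> {g \<in> Gam H n z. acov V H n z g < al}"
    unfolding atil2_def Gam_Un_zero by (intro Max_in) auto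
  thus ?thesis by (simp add: acov_eq_coverage)
qed

lemma choice_prob_bounds: "0 \<le> choice_prob V H n z al \<and> choice_prob V H n z al \<le> 1"
  using coverage_atil1_ge[of V n z] coverage_atil2_less[of V n z]
  by (simp add: choice_prob_def field_simps)

lemma cover_prob_nonneg: "0 \<le> cover_prob V H n z al i"
  using choice_prob_bounds[of V n z] by (simp add: cover_prob_def)

text \<open>This is the identity the randomization probability \<open>choice_prob\<close> is chosen for.\<close>
lemma sum_cover_prob: "(\<Sum>i\<le>n. cover_prob V H n z al i) = real (Suc n) * al"
proof -
  define p c1 c2 where "p = choice_prob V H n z al"
    and "c1 = coverage V H n z (atil1 V H n z al)" and "c2 = coverage V H n z (atil2 V H n z al)"
  have "c2 < c1" using coverage_atil1_ge[of V n z] coverage_atil2_less[of V n z] unfolding c1_def c2_def by linarith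
  have "(\<Sum>i\<le>n. cover_prob V H n z al i) =
      p * (\<Sum>i\<le>n. if below_weight V H n z i < atil1 V H n z al then 1 else 0) +
      (1 - p) * (\<Sum>i\<le>n. if below_weight V H n z i < atil2 V H n z al then 1 else 0)"
    unfolding cover_prob_def p_def sum.distrib sum_distrib_left
    by (intro arg_cong2[where f = "(+)"] sum.cong) auto
  also have "\<dots> = real (Suc n) * (p * c1 + (1 - p) * c2)"
    unfolding c1_def c2_def coverage_def by (simp add: distrib_left mult.left_commute[of "real (Suc n)"])
  also have "p * c1 + (1 - p) * c2 = c2 + p * (c1 - c2)"
    by (simp add: algebra_simps)
  also have "p * (c1 - c2) = al - c2"
    using \<open>c2 < c1\<close> unfolding p_def choice_prob_def c1_def[symmetric] c2_def[symmetric] by simp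
  finally show ?thesis by simp
qed

lemma sum_cover_prob_ennreal:
  "(\<Sum>i\<le>n. ennreal (cover_prob V H n z al i)) = of_nat (Suc n) * ennreal al"
proof -
  have "(\<Sum>i\<le>n. ennreal (cover_prob V H n z al i)) = ennreal (\<Sum>i\<le>n. cover_prob V H n z al i)"
    by (rule sum_ennreal) (rule cover_prob_nonneg)
  also have "\<dots> = of_nat (Suc n) * ennreal al"
    using al by (simp add: sum_cover_prob ennreal_mult flip: ennreal_of_nat_eq_real_of_nat)
  finally show ?thesis .
qed

end

end

lemma Zset_eq_image_mset: "Zset n z = image_mset z (mset_set {..n})"
  by (simp only: Zset_def mset_map mset_upt atLeast0LessThan lessThan_Suc_atMost)

context
  fixes \<tau> :: "nat \<Rightarrow> nat" and n :: nat and z z' :: "nat \<Rightarrow> 'x \<times> real"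
  assumes bij: "bij_betw \<tau> {..n} {..n}" and z': "\<And>k. k \<le> n \<Longrightarrow> z' k = z (\<tau> k)"
begin

lemma Zset_reindex: "Zset n z' = Zset n z"
proof -
  have "image_mset z' (mset_set {..n}) = image_mset (z \<circ> \<tau>) (mset_set {..n})"
    by (intro image_mset_cong) (simp add: z')
  also have "\<dots> = image_mset z (image_mset \<tau> (mset_set {..n}))"
    by (simp add: multiset.map_comp)
  also have "image_mset \<tau> (mset_set {..n}) = mset_set {..n}"
    using bij by (simp add: image_mset_mset_set bij_betw_def)
  finally show ?thesis by (simp add: Zset_eq_image_mset)
qed

lemma Vsc_reindex: "j \<le> n \<Longrightarrow> Vsc V n z' j = Vsc V n z (\<tau> j)"
  by (simp add: Vsc_def Zset_reindex z')

lemma Hloc_reindex: "i \<le> n \<Longrightarrow> j \<le> n \<Longrightarrow> Hloc H n z' i j = Hloc H n z (\<tau> i) (\<tau> j)"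
  by (simp add: Hloc_def Xset_def Zset_reindex z')

lemma pH_reindex:
  assumes "i \<le> n" "j \<le> n"
  shows "pH H n z' i j = pH H n z (\<tau> i) (\<tau> j)"
proof -
  have "(\<Sum>k\<le>n. Hloc H n z' i k) = (\<Sum>k\<le>n. Hloc H n z (\<tau> i) (\<tau> k))"
    using assms by (intro sum.cong) (auto simp: Hloc_reindex)
  also have "\<dots> = (\<Sum>k\<le>n. Hloc H n z (\<tau> i) k)"
    by (rule sum.reindex_bij_betw[OF bij])
  finally show ?thesis using assms by (simp add: pH_def Hloc_reindex)
qed

lemma below_weight_reindex:
  assumes i: "i \<le> n"
  shows "below_weight V H n z' i = below_weight V H n z (\<tau> i)"
proof -
  have "below_weight V H n z' i =
      (\<Sum>j\<le>n. if Vsc V n z (\<tau> j) < Vsc V n z (\<tau> i) then pH H n z (\<tau> i) (\<tau> j) else 0)"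
    unfolding below_weight_def using i by (intro sum.cong) (auto simp: Vsc_reindex pH_reindex)
  also have "\<dots> = below_weight V H n z (\<tau> i)"
    unfolding below_weight_def by (rule sum.reindex_bij_betw[OF bij])
  finally show ?thesis .
qed

lemma coverage_reindex: "coverage V H n z' = coverage V H n z"
proof
  fix g
  have "(\<Sum>i\<le>n. if below_weight V H n z' i < g then 1 else 0 :: real) =
      (\<Sum>i\<le>n. if below_weight V H n z (\<tau> i) < g then 1 else 0)"
    by (intro sum.cong) (auto simp: below_weight_reindex)
  also have "\<dots> = (\<Sum>i\<le>n. if below_weight V H n z i < g then 1 else 0)"
    by (rule sum.reindex_bij_betw[OF bij])
  finally show "coverage V H n z' g = coverage V H n z g"
    by (simp add: coverage_def)
qed

lemma Gam_reindex_subset: "Gam H n z' \<subseteq> Gam H n z"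
proof
  fix g assume "g \<in> Gam H n z'"
  then obtain i I where g: "g = (\<Sum>k\<in>I. pH H n z' i k)" and i: "i \<le> n" and I: "I \<subseteq> {..n}"
    unfolding Gam_def by auto
  have "g = (\<Sum>k\<in>I. pH H n z (\<tau> i) (\<tau> k))"
    unfolding g using i I by (intro sum.cong) (auto simp: pH_reindex)
  also have "\<dots> = (\<Sum>k\<in>\<tau> ` I. pH H n z (\<tau> i) k)"
    using I bij by (subst sum.reindex) (auto simp: bij_betw_def intro: inj_on_subset)
  finally show "g \<in> Gam H n z"
    unfolding Gam_def using i I bij by (auto simp: bij_betw_def intro!: exI[of _ "\<tau> i"] exI[of _ "\<tau> ` I"])
qed

end

lemma Gam_reindex:
  assumes bij: "bij_betw \<tau> {..n} {..n}" and z': "\<And>k. k \<le> n \<Longrightarrow> z' k = z (\<tau> k)"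
  shows "Gam H n z' = Gam H n z"
proof
  show "Gam H n z' \<subseteq> Gam H n z" by (rule Gam_reindex_subset[of \<tau> n z' z, OF bij z'])
  have "z k = z' (inv_into {..n} \<tau> k)" if "k \<le> n" for k
    using z'[of "inv_into {..n} \<tau> k"] bij_betwE[OF bij_betw_inv_into[OF bij]]
      bij_betw_inv_into_right[OF bij] that
    by auto
  then show "Gam H n z \<subseteq> Gam H n z'"
    by (rule Gam_reindex_subset[OF bij_betw_inv_into[OF bij]])
qed

lemma (in localizer) cover_prob_reindex:
  assumes bij: "bij_betw \<tau> {..n} {..n}" and z': "\<And>k. k \<le> n \<Longrightarrow> z' k = z (\<tau> k)"
    and i: "i \<le> n"
  shows "cover_prob V H n z' al i = cover_prob V H n z al (\<tau> i)"
proof -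
  have "acov V H n z' = acov V H n z"
    by (simp add: acov_eq_coverage coverage_reindex[of \<tau> n z' z, OF bij z'])
  then have "atil1 V H n z' al = atil1 V H n z al" "atil2 V H n z' al = atil2 V H n z al"
    by (simp_all add: atil1_def atil2_def Gam_reindex[of \<tau> n z' z, OF bij z'])
  then show ?thesis
    by (simp add: cover_prob_def choice_prob_def coverage_reindex[of \<tau> n z' z, OF bij z'] below_weight_reindex[of \<tau> n z' z, OF bij z' i])
qed

lemma borel_measurable_Min_filter:
  fixes g :: "'k \<Rightarrow> 'a \<Rightarrow> real"
  assumes K: "finite K" and g: "\<And>k. k \<in> K \<Longrightarrow> g k \<in> borel_measurable M"
    and Q: "\<And>k. k \<in> K \<Longrightarrow> Measurable.pred M (\<lambda>z. Q z (g k z))"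
    and nonempty: "\<And>z. z \<in> space M \<Longrightarrow> \<exists>k\<in>K. Q z (g k z)"
  shows "(\<lambda>z. Min {x \<in> (\<lambda>k. g k z) ` K. Q z x}) \<in> borel_measurable M"
proof (rule borel_measurable_iff_le[THEN iffD2], intro allI)
  fix t
  have "{z \<in> space M. Min {x \<in> (\<lambda>k. g k z) ` K. Q z x} \<le> t} =
      (\<Union>k\<in>K. {z \<in> space M. Q z (g k z)} \<inter> {z \<in> space M. g k z \<le> t})"
    using K nonempty by (auto simp: Min_le_iff)
  also have "\<dots> \<in> sets M"
    using K Q g borel_measurable_iff_le by (auto simp: pred_def)
  finally show "{z \<in> space M. Min {x \<in> (\<lambda>k. g k z) ` K. Q z x} \<le> t} \<in> sets M" .
qed

lemma borel_measurable_Max_filter: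
  fixes g :: "'k \<Rightarrow> 'a \<Rightarrow> real"
  assumes K: "finite K" and g: "\<And>k. k \<in> K \<Longrightarrow> g k \<in> borel_measurable M"
    and Q: "\<And>k. k \<in> K \<Longrightarrow> Measurable.pred M (\<lambda>z. Q z (g k z))"
    and nonempty: "\<And>z. z \<in> space M \<Longrightarrow> \<exists>k\<in>K. Q z (g k z)"
  shows "(\<lambda>z. Max {x \<in> (\<lambda>k. g k z) ` K. Q z x}) \<in> borel_measurable M"
proof (rule borel_measurable_iff_ge[THEN iffD2], intro allI)
  fix t
  have "{z \<in> space M. t \<le> Max {x \<in> (\<lambda>k. g k z) ` K. Q z x}} =
      (\<Union>k\<in>K. {z \<in> space M. Q z (g k z)} \<inter> {z \<in> space M. t \<le> g k z})"
    using K nonempty by (auto simp: Max_ge_iff)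
  also have "\<dots> \<in> sets M"
    using K Q g borel_measurable_iff_ge by (auto simp: pred_def)
  finally show "{z \<in> space M. t \<le> Max {x \<in> (\<lambda>k. g k z) ` K. Q z x}} \<in> sets M" .
qed

locale measurable_localizer = localizer H for H :: "'x localizer_fn" +
  fixes M :: "(nat \<Rightarrow> 'x \<times> real) measure" and V :: "'x score" and n :: nat
  assumes Vsc_measurable: "\<And>j. j \<le> n \<Longrightarrow> (\<lambda>z. Vsc V n z j) \<in> borel_measurable M"
    and Hloc_measurable: "\<And>i j. i \<le> n \<Longrightarrow> j \<le> n \<Longrightarrow> (\<lambda>z. Hloc H n z i j) \<in> borel_measurable M"
begin

lemma pH_measurable: "i \<le> n \<Longrightarrow> j \<le> n \<Longrightarrow> (\<lambda>z. pH H n z i j) \<in> borel_measurable M"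
  unfolding pH_def by (intro borel_measurable_divide borel_measurable_sum Hloc_measurable) auto

lemma Gam_elem_measurable:
  "k \<in> {..n} \<times> Pow {..n} \<Longrightarrow> (\<lambda>z. \<Sum>j\<in>snd k. pH H n z (fst k) j) \<in> borel_measurable M"
  by (intro borel_measurable_sum pH_measurable) auto

lemma below_weight_measurable: "i \<le> n \<Longrightarrow> (\<lambda>z. below_weight V H n z i) \<in> borel_measurable M"
  unfolding below_weight_def
  by (intro borel_measurable_sum measurable_If pH_measurable borel_measurable_const)
     (auto intro!: borel_measurable_less Vsc_measurable)

lemma coverage_measurable:
  "f \<in> borel_measurable M \<Longrightarrow> (\<lambda>z. coverage V H n z (f z)) \<in> borel_measurable M"
  unfolding coverage_def
  by (intro borel_measurable_divide borel_measurable_sum measurable_If borel_measurable_const)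
     (auto intro!: borel_measurable_less below_weight_measurable)

context
  fixes al :: real
  assumes al: "0 < al" "al \<le> 1"
begin

lemma atil1_measurable: "(\<lambda>z. atil1 V H n z al) \<in> borel_measurable M"
  unfolding atil1_def Gam_Un_zero unfolding Gam_eq_image acov_eq_coverage
proof (rule borel_measurable_Min_filter)
  fix z show "\<exists>k\<in>{..n} \<times> Pow {..n}. al \<le> coverage V H n z (\<Sum>j\<in>snd k. pH H n z (fst k) j)"
    using sum_pH[of 0 n z] al by (intro bexI[of _ "(0, {..n})"]) auto
qed (auto simp: pred_def intro!: borel_measurable_le borel_measurable_const Gam_elem_measurable coverage_measurable)

lemma atil2_measurable: "(\<lambda>z. atil2 V H n z al) \<in> borel_measurable M"
  unfolding atil2_def Gam_Un_zero unfolding Gam_eq_image acov_eq_coverage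
proof (rule borel_measurable_Max_filter)
  fix z show "\<exists>k\<in>{..n} \<times> Pow {..n}. coverage V H n z (\<Sum>j\<in>snd k. pH H n z (fst k) j) < al"
    using al by (intro bexI[of _ "(0, {})"]) auto
qed (auto simp: pred_def intro!: borel_measurable_less borel_measurable_const Gam_elem_measurable coverage_measurable)

lemma choice_prob_measurable: "(\<lambda>z. choice_prob V H n z al) \<in> borel_measurable M"
  unfolding choice_prob_def
  by (intro borel_measurable_divide borel_measurable_diff borel_measurable_const
      coverage_measurable atil1_measurable atil2_measurable)

lemma cover_prob_measurable: "i \<le> n \<Longrightarrow> (\<lambda>z. cover_prob V H n z al i) \<in> borel_measurable M"
  unfolding cover_prob_def
  by (intro borel_measurable_add measurable_If borel_measurable_const borel_measurable_diff
      choice_prob_measurable borel_measurable_less below_weight_measurable atil1_measurable atil2_measurable)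

end

end

lemma emeasure_uniform_unit_atMost:
  "0 \<le> t \<Longrightarrow> t \<le> 1 \<Longrightarrow> emeasure (uniform_measure lborel {0..1::real}) {..t} = ennreal t"
  by (simp add: Int_atLeastAtMost[of 0 1] divide_ennreal_def flip: atLeastAtMost_def)

lemma emeasure_uniform_unit_greaterThan:
  "0 \<le> t \<Longrightarrow> t \<le> 1 \<Longrightarrow> emeasure (uniform_measure lborel {0..1::real}) {t<..} = ennreal (1 - t)"
proof -
  assume t: "0 \<le> t" "t \<le> 1"
  then have "{0..1} \<inter> {t<..} = {t<..1::real}" by auto
  with t show ?thesis by (simp add: divide_ennreal_def)
qed

lemma emeasure_pair_uniform_choice:
  fixes p :: "'a \<Rightarrow> real"
  assumes p: "p \<in> borel_measurable M" "\<And>z. z \<in> space M \<Longrightarrow> 0 \<le> p z \<and> p z \<le> 1"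
    and A: "Measurable.pred M A" and B: "Measurable.pred M B"
  shows "emeasure (M \<Otimes>\<^sub>M uniform_measure lborel {0..1})
      {\<omega> \<in> space (M \<Otimes>\<^sub>M uniform_measure lborel {0..1}).
        if snd \<omega> \<le> p (fst \<omega>) then A (fst \<omega>) else B (fst \<omega>)} =
    (\<integral>\<^sup>+z. ennreal ((if A z then p z else 0) + (if B z then 1 - p z else 0)) \<partial>M)"
    (is "emeasure (M \<Otimes>\<^sub>M ?U) ?E = _")
proof -
  interpret U: prob_space ?U by (intro prob_space_uniform_measure) auto
  have "?E \<in> sets (M \<Otimes>\<^sub>M ?U)"
    using p(1) A B by measurable
  then have "emeasure (M \<Otimes>\<^sub>M ?U) ?E = (\<integral>\<^sup>+z. emeasure ?U (Pair z -` ?E) \<partial>M)"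
    by (rule U.emeasure_pair_measure_alt)
  also have "\<dots> = (\<integral>\<^sup>+z. ennreal ((if A z then p z else 0) + (if B z then 1 - p z else 0)) \<partial>M)"
  proof (rule nn_integral_cong)
    fix z assume z: "z \<in> space M"
    have "Pair z -` ?E = {u. if u \<le> p z then A z else B z}"
      using z by (auto simp: space_pair_measure)
    moreover have "{u. u \<le> p z} = {..p z}" "{u. \<not> u \<le> p z} = {p z<..}" by auto
    moreover have "emeasure ?U UNIV = 1" using U.emeasure_space_1 by simp
    ultimately show "emeasure ?U (Pair z -` ?E) = ennreal ((if A z then p z else 0) + (if B z then 1 - p z else 0))"
      using p(2)[OF z] emeasure_uniform_unit_atMost[of "p z"] emeasure_uniform_unit_greaterThan[of "p z"]
      by (cases "A z"; cases "B z") (simp_all del: emeasure_uniform_measure)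
  qed
  finally show ?thesis .
qed

lemma nn_integral_PiM_reindex:
  assumes P: "prob_space P" and bij: "bij_betw \<tau> I I"
    and f: "f \<in> borel_measurable (PiM I (\<lambda>_. P))"
  shows "(\<integral>\<^sup>+z. f (\<lambda>k\<in>I. z (\<tau> k)) \<partial>PiM I (\<lambda>_. P)) = (\<integral>\<^sup>+z. f z \<partial>PiM I (\<lambda>_. P))"
proof -
  have \<tau>: "inj_on \<tau> I" "\<tau> \<in> I \<rightarrow> I" using bij by (auto simp: bij_betw_def)
  have "(\<lambda>z. \<lambda>k\<in>I. z (\<tau> k)) \<in> measurable (PiM I (\<lambda>_. P)) (PiM I (\<lambda>_. P))"
    using \<tau> by (intro measurable_restrict measurable_component_singleton) auto
  moreover have "distr (PiM I (\<lambda>_. P)) (PiM I (\<lambda>_. P)) (\<lambda>z. \<lambda>k\<in>I. z (\<tau> k)) = PiM I (\<lambda>_. P)"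
    using distr_PiM_reindex[of I "\<lambda>_. P" \<tau> I] P \<tau> by simp
  ultimately show ?thesis
    using nn_integral_distr[of "\<lambda>z. \<lambda>k\<in>I. z (\<tau> k)" "PiM I (\<lambda>_. P)" "PiM I (\<lambda>_. P)" f] f by simp
qed

lemma nn_integral_PiM_equivariant:
  fixes f :: "nat \<Rightarrow> (nat \<Rightarrow> 'a) \<Rightarrow> ennreal"
  assumes P: "prob_space P"
    and f_meas: "\<And>i. i \<le> n \<Longrightarrow> f i \<in> borel_measurable (PiM {..n} (\<lambda>_. P))"
    and f_equiv: "\<And>\<tau> i z. bij_betw \<tau> {..n} {..n} \<Longrightarrow> i \<le> n \<Longrightarrow> z \<in> space (PiM {..n} (\<lambda>_. P)) \<Longrightarrow>
      f i (\<lambda>k\<in>{..n}. z (\<tau> k)) = f (\<tau> i) z"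
    and f_sum: "\<And>z. z \<in> space (PiM {..n} (\<lambda>_. P)) \<Longrightarrow> (\<Sum>i\<le>n. f i z) = of_nat (Suc n) * c"
  shows "(\<integral>\<^sup>+z. f n z \<partial>PiM {..n} (\<lambda>_. P)) = c"
proof -
  let ?\<Omega> = "PiM {..n} (\<lambda>_. P)"
  interpret prob_space ?\<Omega> using P by (intro prob_space_PiM) auto
  have same: "(\<integral>\<^sup>+z. f n z \<partial>?\<Omega>) = (\<integral>\<^sup>+z. f i z \<partial>?\<Omega>)" if i: "i \<le> n" for i
  proof -
    have bij: "bij_betw (Transposition.transpose i n) {..n} {..n}" using i by simp
    have "(\<integral>\<^sup>+z. f n z \<partial>?\<Omega>) = (\<integral>\<^sup>+z. f n (\<lambda>k\<in>{..n}. z (Transposition.transpose i n k)) \<partial>?\<Omega>)"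
      by (rule nn_integral_PiM_reindex[symmetric, OF P bij f_meas]) simp
    also have "\<dots> = (\<integral>\<^sup>+z. f i z \<partial>?\<Omega>)"
      by (intro nn_integral_cong) (simp add: f_equiv[OF bij])
    finally show ?thesis .
  qed
  have "(\<integral>\<^sup>+z. f n z \<partial>?\<Omega>) * of_nat (Suc n) = (\<Sum>i\<le>n. \<integral>\<^sup>+z. f n z \<partial>?\<Omega>)"
    by (simp add: mult.commute)
  also have "\<dots> = (\<Sum>i\<le>n. \<integral>\<^sup>+z. f i z \<partial>?\<Omega>)"
    by (rule sum.cong) (simp_all add: same)
  also have "\<dots> = (\<integral>\<^sup>+z. (\<Sum>i\<le>n. f i z) \<partial>?\<Omega>)"
    by (rule nn_integral_sum[symmetric]) (simp add: f_meas)
  also have "\<dots> = (\<integral>\<^sup>+z. of_nat (Suc n) * c \<partial>?\<Omega>)"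
    by (intro nn_integral_cong) (simp add: f_sum)
  also have "\<dots> = c * of_nat (Suc n)"
    by (simp add: emeasure_space_1 mult.commute)
  finally show ?thesis
    unfolding ennreal_of_nat_eq_real_of_nat mult_right_ennreal_cancel by simp
qed

theorem theorem2:
  fixes P :: "((real ^ 'p) \<times> real) measure"
    and n :: nat
    and V :: "((real ^ 'p) \<times> real) multiset \<Rightarrow> (real ^ 'p) \<times> real \<Rightarrow> real"
    and H :: "(real ^ 'p) multiset \<Rightarrow> real ^ 'p \<Rightarrow> real ^ 'p \<Rightarrow> real"
    and al :: real
  assumes P_prob: "prob_space P"
    and P_borel: "sets P = sets borel"
    and H_range: "\<And>M x y. 0 \<le> H M x y \<and> H M x y \<le> 1"
    and H_diag: "\<And>M x. H M x x = 1"
    and V_meas: "\<And>j. j \<le> n \<Longrightarrow> (\<lambda>z. Vsc V n z j) \<in> borel_measurable (PiM {..n} (\<lambda>_. P))"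
    and H_meas: "\<And>i j. i \<le> n \<Longrightarrow> j \<le> n \<Longrightarrow>
                   (\<lambda>z. Hloc H n z i j) \<in> borel_measurable (PiM {..n} (\<lambda>_. P))"
    and al_pos: "0 < al" and al_lt1: "al < 1"
  shows "measure (PiM {..n} (\<lambda>_. P) \<Otimes>\<^sub>M uniform_measure lborel {0..1})
           {\<omega> \<in> space (PiM {..n} (\<lambda>_. P) \<Otimes>\<^sub>M uniform_measure lborel {0..1}).
              ereal (Vsc V n (fst \<omega>) n) \<le> QF V H n (fst \<omega>) (atil V H n (fst \<omega>) (snd \<omega>) al)} = al"
proof -
  define \<Omega> where "\<Omega> = PiM {..n} (\<lambda>_. P)"
  define U where "U = uniform_measure lborel {0..1::real}"
  interpret localizer H using H_range H_diag by unfold_locales auto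
  interpret measurable_localizer H \<Omega> V n
    using V_meas H_meas unfolding \<Omega>_def by unfold_locales
  have al: "0 < al" "al \<le> 1" using al_pos al_lt1 by auto
  have "{\<omega> \<in> space (\<Omega> \<Otimes>\<^sub>M U). ereal (Vsc V n (fst \<omega>) n) \<le> QF V H n (fst \<omega>) (atil V H n (fst \<omega>) (snd \<omega>) al)} =
      {\<omega> \<in> space (\<Omega> \<Otimes>\<^sub>M U). if snd \<omega> \<le> choice_prob V H n (fst \<omega>) al
        then below_weight V H n (fst \<omega>) n < atil1 V H n (fst \<omega>) al
        else below_weight V H n (fst \<omega>) n < atil2 V H n (fst \<omega>) al}"
    by (simp add: Vsc_le_QF_iff atil_eq_if_choice_prob)
  also have "emeasure (\<Omega> \<Otimes>\<^sub>M U) \<dots> = (\<integral>\<^sup>+z. ennreal (cover_prob V H n z al n) \<partial>\<Omega>)"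
    unfolding U_def cover_prob_def
    by (intro emeasure_pair_uniform_choice choice_prob_measurable choice_prob_bounds al)
      (auto simp: pred_def intro!: borel_measurable_less below_weight_measurable atil1_measurable atil2_measurable al)
  also have "\<dots> = ennreal al"
    unfolding \<Omega>_def
    by (rule nn_integral_PiM_equivariant[OF P_prob, where f = "\<lambda>i z. ennreal (cover_prob V H n z al i)"])
      (use cover_prob_measurable[OF al] cover_prob_reindex sum_cover_prob_ennreal[OF al] in \<open>auto simp: \<Omega>_def\<close>)
  finally show ?thesis
    using al unfolding \<Omega>_def U_def by (simp add: measure_def)
qed

end
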